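(* Let $d\ge 2$ and let $\rho_{DS}=\sum_{\mathbf{k}} p_{\mathbf{k}}\,|D_{\mathbf{k}}\rangle\langle D_{\mathbf{k}}|$ be a diagonal symmetric state on $(\mathbb{C}^d)^{\otimes 3}$. Let $M^{(3)}(\rho_{DS})=\bigoplus_{i=0}^{d-1}M^{(3)}_i(\rho_{DS})$, where $M^{(3)}_i(\rho_{DS})$ is the $d\times d$ matrix with entries $\big(M^{(3)}_i\big)_{ab}=\bar p_{iab}$, $a,b\in\{0,\dots,d-1\}$. Then $\rho_{DS}$ is PPT if and only if $M^{(3)}(\rho_{DS})\in\mathcal{DNN}_{d^2}$.
   Context: For $N$ parties and local dimension $d$, $\mathbf{k}=(k_0,\dots,k_{d-1})$, $k_i\ge0$, $\sum_ik_i=N$, and the Dicke state is $|D_{\mathbf k}\rangle=\binom{N}{\mathbf k}^{-1/2}\sum_{\pi}\pi\big(|0\rangle^{\otimes k_0}\otimes\cdots\otimes|d-1\rangle^{\otimes k_{d-1}}\big)$, summing over all distinct permutations of tensor factors, with $\binom{N}{\mathbf k}=\frac{N!}{k_0!\cdots k_{d-1}!}$. A diagonal symmetric state is $\sum_{\mathbf k}p_{\mathbf k}|D_{\mathbf k}\rangle\langle D_{\mathbf k}|$ with $p_{\mathbf k}\ge0$, $\sum p_{\mathbf k}=1$. Here $N=3$; $p_{ijk}$ denotes the coefficient of the Dicke state with index multiset $\{i,j,k\}$, and $\bar p_{ijk}=p_{ijk}/N_{ijk}$ with $N_{ijk}=1$ if $i=j=k$, $3$ if exactly two indices coincide, $6$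 if all are distinct. The state is PPT if its partial transpose with respect to a single party (by permutation symmetry, any party) is positive semidefinite. $\mathcal{DNN}_n$ is the cone of $n\times n$ doubly non-negative matrices: positive semidefinite with all entries non-negative. *)

theory Defs
  imports Complex_Main "HOL-Library.Multiset"
begin

text \<open>Computational basis of (C^d)^(x3): triples (x,y,z) with entries in {0..<d}.
  Operators are matrices indexed by these triples.\<close>
definition idx3 :: "nat \<Rightarrow> (nat \<times> nat \<times> nat) set" where
  "idx3 d = {0..<d} \<times> {0..<d} \<times> {0..<d}"

text \<open>Dicke indices k = (k_0,...,k_{d-1}) with sum 3, represented as multisets of size 3
  over {0..<d} (count k i = k_i).\<close>
definition dicke_idx :: "nat \<Rightarrow> nat multiset set" where
  "dicke_idx d = {k. size k = 3 \<and> set_mset k \<subseteq> {0..<d}}"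

definition multinom3 :: "nat multiset \<Rightarrow> real" where
  "multinom3 k = fact 3 / (\<Prod>i\<in>set_mset k. fact (count k i))"

text \<open>Dicke state |D_k>: sum over distinct permutations of |0..0 1..1 ...>, normalised;
  its amplitude at basis vector |x y z> is binom^(-1/2) iff {x,y,z} = k as multisets.\<close>
definition dicke_vec :: "nat multiset \<Rightarrow> nat \<times> nat \<times> nat \<Rightarrow> complex" where
  "dicke_vec k = (\<lambda>(x,y,z). if {#x, y, z#} = k then complex_of_real (1 / sqrt (multinom3 k)) else 0)"

definition rho_DS :: "nat \<Rightarrow> (nat multiset \<Rightarrow> real) \<Rightarrow>
    (nat \<times> nat \<times> nat) \<Rightarrow> (nat \<times> nat \<times> nat) \<Rightarrow> complex" where
  "rho_DS d p = (\<lambda>a b. \<Sum>k\<in>dicke_idx d. complex_of_real (p k) * dicke_vec k a * cnj (dicke_vec k b))"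

definition diag_sym_state :: "nat \<Rightarrow> (nat multiset \<Rightarrow> real) \<Rightarrow> bool" where
  "diag_sym_state d p \<longleftrightarrow> (\<forall>k\<in>dicke_idx d. 0 \<le> p k) \<and> (\<Sum>k\<in>dicke_idx d. p k) = 1"

definition partial_transpose1 ::
  "((nat \<times> nat \<times> nat) \<Rightarrow> (nat \<times> nat \<times> nat) \<Rightarrow> complex) \<Rightarrow>
   (nat \<times> nat \<times> nat) \<Rightarrow> (nat \<times> nat \<times> nat) \<Rightarrow> complex" where
  "partial_transpose1 A = (\<lambda>(x,y,z) (x',y',z'). A (x',y,z) (x,y',z'))"

definition psd_on :: "'i set \<Rightarrow> ('i \<Rightarrow> 'i \<Rightarrow> complex) \<Rightarrow> bool" where
  "psd_on I A \<longleftrightarrow> (\<forall>a\<in>I. \<forall>b\<in>I. A a b = cnj (A b a)) \<and>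
     (\<forall>v :: 'i \<Rightarrow> complex. 0 \<le> Re (\<Sum>a\<in>I. \<Sum>b\<in>I. cnj (v a) * A a b * v b))"

definition PPT :: "nat \<Rightarrow> (nat multiset \<Rightarrow> real) \<Rightarrow> bool" where
  "PPT d p \<longleftrightarrow> psd_on (idx3 d) (partial_transpose1 (rho_DS d p))"

definition real_psd_on :: "'i set \<Rightarrow> ('i \<Rightarrow> 'i \<Rightarrow> real) \<Rightarrow> bool" where
  "real_psd_on I M \<longleftrightarrow> (\<forall>a\<in>I. \<forall>b\<in>I. M a b = M b a) \<and>
     (\<forall>v :: 'i \<Rightarrow> real. 0 \<le> (\<Sum>a\<in>I. \<Sum>b\<in>I. v a * M a b * v b))"

definition DNN_on :: "'i set \<Rightarrow> ('i \<Rightarrow> 'i \<Rightarrow> real) \<Rightarrow> bool" where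
  "DNN_on I M \<longleftrightarrow> real_psd_on I M \<and> (\<forall>a\<in>I. \<forall>b\<in>I. 0 \<le> M a b)"

definition N3 :: "nat multiset \<Rightarrow> real" where
  "N3 k = (if card (set_mset k) = 1 then 1 else if card (set_mset k) = 2 then 3 else 6)"

definition pbar :: "(nat multiset \<Rightarrow> real) \<Rightarrow> nat multiset \<Rightarrow> real" where
  "pbar p k = p k / N3 k"

text \<open>M^(3) = direct sum over i of M_i, (M_i)_{ab} = pbar_{iab}; indexed by pairs (i,a),
  i.e. a d^2 x d^2 block-diagonal matrix.\<close>
definition M3 :: "(nat multiset \<Rightarrow> real) \<Rightarrow> nat \<times> nat \<Rightarrow> nat \<times> nat \<Rightarrow> real" where
  "M3 p = (\<lambda>(i,a) (j,b). if i = j then pbar p {#i, a, b#} else 0)"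

end

theory Submission
  imports Defs
begin

text \<open>The partial transpose of \<open>\<rho>\<^sub>D\<^sub>S\<close> is a real matrix indexed by basis triples
  \<open>(x, y, z)\<close>.  It has no entries between triples with \<open>x \<in> {y, z}\<close> and the others.  On the first
  kind it is the pullback of \<open>M3\<close> along \<open>(x, x, t), (x, t, x) \<mapsto> (t, x)\<close>; on the second kind it
  is diagonal in \<open>(x, {y, z})\<close> with the nonnegative entries \<open>pbar p {x, y, z}\<close>.  Pullbacks and
  sums of positive semidefinite matrices are positive semidefinite, so \<open>M3\<close> psd implies PPT.
  Conversely \<open>M3\<close> is the pullback of the partial transpose along \<open>(i, a) \<mapsto> (a, a, i)\<close>.\<close>

lemma real_psd_on_add:
  assumes "real_psd_on I A" and "real_psd_on I B"
  shows "real_psd_on I (\<lambda>a b. A a b + B a b)"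
proof -
  have "(\<Sum>a\<in>I. \<Sum>b\<in>I. v a * (A a b + B a b) * v b) =
        (\<Sum>a\<in>I. \<Sum>b\<in>I. v a * A a b * v b) + (\<Sum>a\<in>I. \<Sum>b\<in>I. v a * B a b * v b)" for v
    by (simp add: distrib_left distrib_right sum.distrib)
  with assms show ?thesis
    unfolding real_psd_on_def by (simp add: add_nonneg_nonneg)
qed

lemma real_psd_on_diagonal:
  assumes "finite I" and "\<forall>a\<in>I. 0 \<le> D a"
  shows "real_psd_on I (\<lambda>a b. if a = b then D a else 0)"
proof -
  have "(\<Sum>a\<in>I. \<Sum>b\<in>I. v a * (if a = b then D a else 0) * v b) = (\<Sum>a\<in>I. D a * (v a)\<^sup>2)" for v
    using assms(1) by (simp add: if_distrib if_distribR power2_eq_square mult_ac cong: if_cong)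
  with assms(2) show ?thesis
    unfolding real_psd_on_def by (simp add: sum_nonneg)
qed

lemma real_psd_on_congruence:
  assumes K: "real_psd_on I K"
    and A: "\<forall>r\<in>R. \<forall>c\<in>R. A r c = (\<Sum>a\<in>I. \<Sum>b\<in>I. \<phi> r a * K a b * \<phi> c b)"
  shows "real_psd_on R A"
  unfolding real_psd_on_def
proof (intro conjI ballI allI)
  fix r c assume "r \<in> R" "c \<in> R"
  have "(\<Sum>a\<in>I. \<Sum>b\<in>I. \<phi> c a * K a b * \<phi> r b) = (\<Sum>b\<in>I. \<Sum>a\<in>I. \<phi> c a * K a b * \<phi> r b)"
    by (rule sum.swap)
  also have "\<dots> = (\<Sum>b\<in>I. \<Sum>a\<in>I. \<phi> r b * K b a * \<phi> c a)"
    using K unfolding real_psd_on_def by (intro sum.cong refl) (simp add: mult_ac)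
  finally show "A r c = A c r"
    using A \<open>r \<in> R\<close> \<open>c \<in> R\<close> by simp
next
  fix w :: "_ \<Rightarrow> real"
  define u where "u a = (\<Sum>r\<in>R. w r * \<phi> r a)" for a
  have "(\<Sum>r\<in>R. \<Sum>c\<in>R. w r * A r c * w c)
      = (\<Sum>r\<in>R. \<Sum>c\<in>R. \<Sum>a\<in>I. \<Sum>b\<in>I. (w r * \<phi> r a) * K a b * (w c * \<phi> c b))"
    using A by (simp add: sum_distrib_left sum_distrib_right mult_ac)
  also have "\<dots> = (\<Sum>a\<in>I. \<Sum>b\<in>I. \<Sum>r\<in>R. \<Sum>c\<in>R. (w r * \<phi> r a) * K a b * (w c * \<phi> c b))"
    by (simp only: sum.swap[where A = R and B = I])
  also have "\<dots> = (\<Sum>a\<in>I. \<Sum>b\<in>I. u a * K a b * u b)"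
    unfolding u_def sum_distrib_left sum_distrib_right
    by (rule sum.cong[OF refl], rule sum.cong[OF refl], rule sum.swap)
  finally show "0 \<le> (\<Sum>r\<in>R. \<Sum>c\<in>R. w r * A r c * w c)"
    using K unfolding real_psd_on_def by simp
qed

lemma real_psd_on_pullback:
  assumes "real_psd_on I K" and "finite I" and "\<forall>r\<in>R. P r \<longrightarrow> f r \<in> I"
  shows "real_psd_on R (\<lambda>r c. if P r \<and> P c then K (f r) (f c) else 0)"
proof (rule real_psd_on_congruence[OF assms(1)], intro ballI)
  fix r c assume "r \<in> R" "c \<in> R"
  show "(if P r \<and> P c then K (f r) (f c) else 0) =
      (\<Sum>a\<in>I. \<Sum>b\<in>I. (if P r \<and> a = f r then 1 else 0) * K a b * (if P c \<and> b = f c then 1 else 0))"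
  proof (cases "P r \<and> P c")
    case True
    then have "(if P r \<and> a = f r then 1 else 0) * K a b * (if P c \<and> b = f c then 1 else 0) =
        (if b = f c then if a = f r then K a b else 0 else 0)" for a b
      by simp
    with True \<open>r \<in> R\<close> \<open>c \<in> R\<close> assms(2,3) show ?thesis
      by simp
  next
    case False
    then show ?thesis by auto
  qed
qed

lemma psd_on_iff_real_psd_on:
  assumes "\<forall>a\<in>I. \<forall>b\<in>I. B a b = complex_of_real (A a b)"
  shows "psd_on I B \<longleftrightarrow> real_psd_on I A"
proof -
  have hermitian_iff: "(\<forall>a\<in>I. \<forall>b\<in>I. B a b = cnj (B b a)) \<longleftrightarrow> (\<forall>a\<in>I. \<forall>b\<in>I. A a b = A b a)"
    using assms by simp
  have form: "Re (\<Sum>a\<in>I. \<Sum>b\<in>I. cnj (v a) * B a b * v b) =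
      (\<Sum>a\<in>I. \<Sum>b\<in>I. Re (v a) * A a b * Re (v b)) + (\<Sum>a\<in>I. \<Sum>b\<in>I. Im (v a) * A a b * Im (v b))" for v
    using assms by (simp add: sum.distrib[symmetric] algebra_simps)
  show ?thesis
    unfolding psd_on_def real_psd_on_def hermitian_iff form
  proof (intro conj_cong refl iffI allI)
    fix w :: "_ \<Rightarrow> real"
    assume "\<forall>v. 0 \<le> (\<Sum>a\<in>I. \<Sum>b\<in>I. Re (v a) * A a b * Re (v b)) + (\<Sum>a\<in>I. \<Sum>b\<in>I. Im (v a) * A a b * Im (v b))"
    then show "0 \<le> (\<Sum>a\<in>I. \<Sum>b\<in>I. w a * A a b * w b)"
      by (auto dest: spec[of _ "\<lambda>a. complex_of_real (w a)"])
  qed (simp add: add_nonneg_nonneg)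
qed

lemma finite_idx3: "finite (idx3 d)"
  unfolding idx3_def by simp

lemma finite_dicke_idx: "finite (dicke_idx d)"
proof -
  have "dicke_idx d = multisets_of_size {0..<d} 3"
    unfolding dicke_idx_def multisets_of_size_def by auto
  then show ?thesis
    by (simp add: finite_multisets_of_size)
qed

lemma N3_pos: "0 < N3 k"
  unfolding N3_def by simp

lemma pbar_nonneg: "0 \<le> p k \<Longrightarrow> 0 \<le> pbar p k"
  unfolding pbar_def using N3_pos by (simp add: less_imp_le)

lemma multinom3_eq_N3: "multinom3 {#x, y, z#} = N3 {#x, y, z#}"
  unfolding multinom3_def N3_def
  by (cases "x = y"; cases "x = z"; cases "y = z") (auto simp: fact_numeral insert_commute)

lemma rho_DS_apply:
  assumes "x < d" "y < d" "z < d"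
  shows "rho_DS d p (x, y, z) (x', y', z') =
    complex_of_real (if {#x, y, z#} = {#x', y', z'#} then pbar p {#x, y, z#} else 0)"
proof -
  let ?k = "{#x, y, z#}"
  have "?k \<in> dicke_idx d"
    using assms unfolding dicke_idx_def by auto
  moreover have "complex_of_real (p k) * dicke_vec k (x, y, z) * cnj (dicke_vec k (x', y', z')) =
      (if k = ?k then complex_of_real (if ?k = {#x', y', z'#} then pbar p ?k else 0) else 0)" for k
  proof (cases "k = ?k")
    case True
    have "1 / sqrt (N3 ?k) * (1 / sqrt (N3 ?k)) = 1 / N3 ?k"
      using N3_pos[of ?k] by (simp add: power_divide less_imp_le flip: power2_eq_square)
    with True show ?thesis
      unfolding dicke_vec_def pbar_def by (auto simp: multinom3_eq_N3 simp flip: of_real_mult)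
  qed (simp add: dicke_vec_def)
  ultimately show ?thesis
    unfolding rho_DS_def by (simp add: finite_dicke_idx)
qed

definition PT_DS :: "(nat multiset \<Rightarrow> real) \<Rightarrow> nat \<times> nat \<times> nat \<Rightarrow> nat \<times> nat \<times> nat \<Rightarrow> real" where
  "PT_DS p = (\<lambda>(x, y, z) (x', y', z').
     if {#x', y, z#} = {#x, y', z'#} then pbar p {#x', y, z#} else 0)"

lemma partial_transpose1_rho_DS:
  assumes "r \<in> idx3 d" and "c \<in> idx3 d"
  shows "partial_transpose1 (rho_DS d p) r c = complex_of_real (PT_DS p r c)"
  using assms unfolding idx3_def partial_transpose1_def PT_DS_def
  by (cases r, cases c) (simp add: rho_DS_apply)

lemma PPT_iff_real_psd_on_PT_DS: "PPT d p \<longleftrightarrow> real_psd_on (idx3 d) (PT_DS p)"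
  unfolding PPT_def by (simp add: psd_on_iff_real_psd_on partial_transpose1_rho_DS)

lemma PT_DS_aai_eq_M3: "PT_DS p (a, a, i) (b, b, j) = M3 p (i, a) (j, b)"
  unfolding PT_DS_def M3_def by (simp add: add_mset_commute)

definition first_repeated :: "nat \<times> nat \<times> nat \<Rightarrow> bool" where
  "first_repeated = (\<lambda>(x, y, z). x = y \<or> x = z)"

definition M3_index :: "nat \<times> nat \<times> nat \<Rightarrow> nat \<times> nat" where
  "M3_index = (\<lambda>(x, y, z). (if x = y then z else y, x))"

definition first_and_rest :: "nat \<times> nat \<times> nat \<Rightarrow> nat \<times> nat multiset" where
  "first_and_rest = (\<lambda>(x, y, z). (x, {#y, z#}))"

definition unrepeated_weight :: "(nat multiset \<Rightarrow> real) \<Rightarrow> nat \<times> nat multiset \<Rightarrow> real" where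
  "unrepeated_weight p = (\<lambda>(x, m). if x \<in># m then 0 else pbar p (add_mset x m))"

lemma PT_DS_decompose:
  "PT_DS p r c =
     (if first_repeated r \<and> first_repeated c then M3 p (M3_index r) (M3_index c) else 0) +
     (if first_and_rest r = first_and_rest c then unrepeated_weight p (first_and_rest r) else 0)"
proof -
  obtain x y z x' y' z' where r: "r = (x, y, z)" and c: "c = (x', y', z')"
    by (cases r, cases c)
  define t where "t = (if x = y then z else y)"
  define t' where "t' = (if x' = y' then z' else y')"
  consider (both) "first_repeated r" "first_repeated c"
    | (one) "first_repeated r" "\<not> first_repeated c"
    | (none) "\<not> first_repeated r"
    by blast
  then show ?thesis
  proof cases
    case both
    then have "{#y, z#} = {#x, t#}" "{#y', z'#} = {#x', t'#}"
      unfolding r c first_repeated_def t_def t'_def by auto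
    with both show ?thesis
      unfolding r c PT_DS_def M3_def M3_index_def first_and_rest_def unrepeated_weight_def t_def t'_def
      by (auto simp: add_mset_commute)
  next
    case one
    then have rep: "{#y, z#} = {#x, t#}" and unrep: "x' \<notin># {#y', z'#}"
      unfolding r c first_repeated_def t_def by auto
    have "{#x', y, z#} \<noteq> {#x, y', z'#}"
    proof
      assume "{#x', y, z#} = {#x, y', z'#}"
      then have "{#x', t#} = {#y', z'#}"
        using rep by (simp add: add_mset_commute)
      with unrep show False
        by (metis union_single_eq_member)
    qed
    with one rep show ?thesis
      unfolding r c PT_DS_def first_and_rest_def unrepeated_weight_def by auto
  next
    case none
    then have unrep: "x \<notin># {#y, z#}"
      unfolding r first_repeated_def by auto
    have same_first: "{#x', y, z#} = {#x, y', z'#} \<longleftrightarrow> x = x' \<and> {#y, z#} = {#y', z'#}"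
    proof
      assume eq: "{#x', y, z#} = {#x, y', z'#}"
      then have "x \<in># {#x', y, z#}"
        by simp
      with unrep have "x = x'"
        by auto
      with eq show "x = x' \<and> {#y, z#} = {#y', z'#}"
        by simp
    qed simp
    then have PT_DS_eq: "PT_DS p r c = (if first_and_rest r = first_and_rest c then pbar p {#x, y, z#} else 0)"
      unfolding r c PT_DS_def first_and_rest_def prod.case same_first by auto
    have weight_eq: "unrepeated_weight p (first_and_rest r) = pbar p {#x, y, z#}"
      using unrep unfolding r first_and_rest_def unrepeated_weight_def by simp
    show ?thesis
      unfolding PT_DS_eq weight_eq using none by simp
  qed
qed

lemma real_psd_on_PT_DS_iff_M3:
  assumes p_nonneg: "\<forall>k\<in>dicke_idx d. 0 \<le> p k"
  shows "real_psd_on (idx3 d) (PT_DS p) \<longleftrightarrow> real_psd_on ({0..<d} \<times> {0..<d}) (M3 p)"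
proof
  assume "real_psd_on (idx3 d) (PT_DS p)"
  from real_psd_on_pullback[OF this finite_idx3, where P = "\<lambda>_. True" and f = "\<lambda>(i, a). (a, a, i)"]
  show "real_psd_on ({0..<d} \<times> {0..<d}) (M3 p)"
    by (simp add: idx3_def case_prod_beta PT_DS_aai_eq_M3)
next
  assume M3_psd: "real_psd_on ({0..<d} \<times> {0..<d}) (M3 p)"
  have "\<forall>r\<in>idx3 d. first_repeated r \<longrightarrow> M3_index r \<in> {0..<d} \<times> {0..<d}"
    unfolding idx3_def M3_index_def by auto
  from real_psd_on_pullback[OF M3_psd _ this]
  have repeated_part: "real_psd_on (idx3 d)
      (\<lambda>r c. if first_repeated r \<and> first_repeated c then M3 p (M3_index r) (M3_index c) else 0)"
    by simp
  have "\<forall>t\<in>first_and_rest ` idx3 d. 0 \<le> unrepeated_weight p t"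
    using p_nonneg unfolding idx3_def first_and_rest_def unrepeated_weight_def dicke_idx_def
    by (auto intro: pbar_nonneg)
  from real_psd_on_pullback[OF real_psd_on_diagonal[OF _ this],
      where P = "\<lambda>_. True" and f = first_and_rest and R = "idx3 d"]
  have unrepeated_part: "real_psd_on (idx3 d)
      (\<lambda>r c. if first_and_rest r = first_and_rest c then unrepeated_weight p (first_and_rest r) else 0)"
    by (simp add: finite_idx3)
  show "real_psd_on (idx3 d) (PT_DS p)"
    using real_psd_on_add[OF repeated_part unrepeated_part] by (simp add: PT_DS_decompose[abs_def])
qed

lemma M3_nonneg:
  assumes "\<forall>k\<in>dicke_idx d. 0 \<le> p k" and "a \<in> {0..<d} \<times> {0..<d}" and "b \<in> {0..<d} \<times> {0..<d}"
  shows "0 \<le> M3 p a b"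
  using assms unfolding M3_def dicke_idx_def by (auto intro!: pbar_nonneg)

theorem theorem5:
  fixes d :: nat and p :: "nat multiset \<Rightarrow> real"
  assumes "d \<ge> 2" and "diag_sym_state d p"
  shows "PPT d p \<longleftrightarrow> DNN_on ({0..<d} \<times> {0..<d}) (M3 p)"
proof -
  have p_nonneg: "\<forall>k\<in>dicke_idx d. 0 \<le> p k"
    using assms(2) unfolding diag_sym_state_def by simp
  have "PPT d p \<longleftrightarrow> real_psd_on ({0..<d} \<times> {0..<d}) (M3 p)"
    using PPT_iff_real_psd_on_PT_DS real_psd_on_PT_DS_iff_M3[OF p_nonneg] by simp
  then show ?thesis
    unfolding DNN_on_def using M3_nonneg[OF p_nonneg] by blast
qed

end
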